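(* Let $G_2=BS(1,2)=\langle a,b\mid bab^{-1}=a^2\rangle$ and let $\Gamma_2$ be its Cayley graph with respect to $\{a,b\}$. If $\sigma$ is a geodesic in $\Gamma_2$, then $\sigma$ does not contain three distinct $b$-edges $e_1,e_2,e_3$ with $h(e_1)=h(e_2)=h(e_3)$.
   Context: $\Gamma_2$ has vertex set $G_2$ and edges $\{g,gs\}$ for $s\in\{a^{\pm1},b^{\pm1}\}$; an edge $\{g,gb\}$ is a $b$-edge and $\{g,ga\}$ an $a$-edge. The height $h(\omega)\in\mathbb{Z}$ of $\omega\in G_2$ is the integer with $\omega=a^kb^{h(\omega)}$ in the abelianization of $G_2$ for some $k$ (i.e., the exponent sum of $b$ in any word representing $\omega$). For a $b$-edge $e=\{v,w\}$, $h(e)=\max\{h(v),h(w)\}$. *)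

theory Defs
  imports Main
begin

datatype gen = A | Ainv | B | Binv

fun ginv :: "gen \<Rightarrow> gen" where
  "ginv A = Ainv" | "ginv Ainv = A" | "ginv B = Binv" | "ginv Binv = B"

inductive weq :: "gen list \<Rightarrow> gen list \<Rightarrow> bool" where
  weq_refl: "weq u u"
| weq_sym: "weq u v \<Longrightarrow> weq v u"
| weq_trans: "weq u v \<Longrightarrow> weq v w \<Longrightarrow> weq u w"
| weq_cancel: "weq (u @ [x, ginv x] @ v) (u @ v)"
| weq_rel: "weq (u @ [B, A, Binv] @ v) (u @ [A, A] @ v)"

lemma weq_equivp: "equivp weq"
  by (rule equivpI; auto intro: reflpI sympI transpI weq.intros)

quotient_type G2 = "gen list" / weq
  by (rule weq_equivp)

lemma weq_snoc: "weq u v \<Longrightarrow> weq (u @ [s]) (v @ [s])"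
proof (induction rule: weq.induct)
  case (weq_cancel u x v) then show ?case using weq.weq_cancel[of u x "v @ [s]"] by simp
next
  case (weq_rel u v) then show ?case using weq.weq_rel[of u "v @ [s]"] by simp
qed (auto intro: weq.intros)

lift_definition rmul :: "G2 \<Rightarrow> gen \<Rightarrow> G2" is "\<lambda>w s. w @ [s]"
  by (rule weq_snoc)

fun bexp :: "gen \<Rightarrow> int" where
  "bexp A = 0" | "bexp Ainv = 0" | "bexp B = 1" | "bexp Binv = -1"

lemma bexp_ginv: "bexp (ginv x) = - bexp x"
  by (cases x) auto

lemma weq_bsum: "weq u v \<Longrightarrow> sum_list (map bexp u) = sum_list (map bexp v)"
  by (induction rule: weq.induct) (auto simp: bexp_ginv)

lift_definition height :: "G2 \<Rightarrow> int" is "\<lambda>w. sum_list (map bexp w)"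
  by (rule weq_bsum)

definition cayley_edges :: "G2 set set" where
  "cayley_edges = {{g, rmul g s} | g s. True}"

definition b_edge :: "G2 set \<Rightarrow> bool" where
  "b_edge e \<longleftrightarrow> (\<exists>g. e = {g, rmul g B})"

definition edge_height :: "G2 set \<Rightarrow> int" where
  "edge_height e = Max (height ` e)"

definition is_path :: "G2 list \<Rightarrow> bool" where
  "is_path vs \<longleftrightarrow> vs \<noteq> [] \<and>
     (\<forall>i. Suc i < length vs \<longrightarrow> {vs ! i, vs ! Suc i} \<in> cayley_edges)"

definition path_edges :: "G2 list \<Rightarrow> G2 set set" where
  "path_edges vs = {{vs ! i, vs ! Suc i} | i. Suc i < length vs}"

definition geodesic :: "G2 list \<Rightarrow> bool" where
  "geodesic vs \<longleftrightarrow> is_path vs \<and>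
     (\<forall>ws. is_path ws \<and> hd ws = hd vs \<and> last ws = last vs \<longrightarrow> length vs \<le> length ws)"

end

(* A geodesic spells a word w in the generators.  A b-edge of height h is traversed by a letter
   b or b^-1 of w that moves between levels h - 1 and h of the height function, and between two
   such crossings in the same direction there is one in the opposite direction.  Three b-edges of
   height h therefore yield a factorisation w = u x w1 x^-1 w2 x r with x = b^(+-1), where w1 and
   w2 have b-exponent sum zero.  Elements of height zero have the form b^-m a^k b^m, i.e. they lie
   in an abelian subgroup (a copy of Z[1/2]), so x w1 x^-1 commutes with w2 and w represents the
   same element as the word u w2 x w1 r, which is shorter by two. *)

theory Submission
  imports Defs
begin

lemma weq_append_left: "weq u v \<Longrightarrow> weq (p @ u) (p @ v)"
proof (induction rule: weq.induct)
  case (weq_cancel u x v) then show ?case using weq.weq_cancel[of "p @ u" x v] by simp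
next
  case (weq_rel u v) then show ?case using weq.weq_rel[of "p @ u" v] by simp
qed (auto intro: weq.intros)

lemma weq_append_right: "weq u v \<Longrightarrow> weq (u @ q) (v @ q)"
proof (induction rule: weq.induct)
  case (weq_cancel u x v) then show ?case using weq.weq_cancel[of u x "v @ q"] by simp
next
  case (weq_rel u v) then show ?case using weq.weq_rel[of u "v @ q"] by simp
qed (auto intro: weq.intros)

instantiation G2 :: monoid_mult
begin

lift_definition one_G2 :: G2 is "[]" .

lift_definition times_G2 :: "G2 \<Rightarrow> G2 \<Rightarrow> G2" is append
  by (meson weq_append_left weq_append_right weq_trans)

instance
  by standard (transfer, simp add: weq_refl)+

end

lift_definition letter :: "gen \<Rightarrow> G2" is "\<lambda>s. [s]" .

lemma G2_induct [case_names one snoc]: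
  assumes "P 1" and "\<And>g s. P g \<Longrightarrow> P (g * letter s)"
  shows "P g"
proof (induction g rule: G2.abs_induct)
  case (1 w)
  then show ?case
  proof (induction w rule: rev_induct)
    case Nil
    then show ?case using assms(1) by (simp add: one_G2_def)
  next
    case (snoc s w)
    then show ?case using assms(2) by (metis times_G2.abs_eq letter.abs_eq)
  qed
qed

lemma rmul_eq_times_letter: "rmul g s = g * letter s"
  by transfer (simp add: weq_refl)

lemma ginv_ginv [simp]: "ginv (ginv s) = s"
  by (cases s) auto

lemma letter_times_ginv [simp]: "letter s * letter (ginv s) = 1"
  by transfer (use weq_cancel[of "[]" _ "[]"] in simp)

lemma ginv_times_letter [simp]: "letter (ginv s) * letter s = 1"
  using letter_times_ginv[of "ginv s"] by simp

lemma letter_inverses [simp]: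
  "letter A * letter Ainv = 1" "letter Ainv * letter A = 1"
  "letter B * letter Binv = 1" "letter Binv * letter B = 1"
  "letter A * (letter Ainv * g) = g" "letter Ainv * (letter A * g) = g"
  "letter B * (letter Binv * g) = g" "letter Binv * (letter B * g) = g"
  using letter_times_ginv[of A] letter_times_ginv[of B] ginv_times_letter[of A] ginv_times_letter[of B]
  by (simp_all flip: mult.assoc)

lemma letter_B_A_Binv: "letter B * letter A * letter Binv = letter A * letter A"
  by transfer (use weq_rel[of "[]" "[]"] in simp)

lemma height_one [simp]: "height 1 = 0"
  by transfer simp

lemma height_times [simp]: "height (g * g') = height g + height g'"
  by transfer simp

lemma height_letter [simp]: "height (letter s) = bexp s"
  by transfer simp

lemma height_power [simp]: "height (g ^ n) = int n * height g"
  by (induction n) (auto simp: algebra_simps)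

definition apow :: "int \<Rightarrow> G2" where
  "apow k = (if 0 \<le> k then letter A ^ nat k else letter Ainv ^ nat (- k))"

lemma apow_0 [simp]: "apow 0 = 1"
  by (simp add: apow_def)

lemma height_apow [simp]: "height (apow k) = 0"
  by (simp add: apow_def)

lemma apow_plus_1: "apow (k + 1) = apow k * letter A"
proof (cases "0 \<le> k")
  case True
  then have "nat (k + 1) = Suc (nat k)" by simp
  with True show ?thesis by (simp add: apow_def power_commutes)
next
  case False
  then have "nat (- k) = Suc (nat (- (k + 1)))" by simp
  with False show ?thesis
    by (simp add: apow_def power_Suc2 mult.assoc del: power_Suc)
qed

lemma apow_minus_1: "apow (k - 1) = apow k * letter Ainv"
  using apow_plus_1[of "k - 1"] by (simp add: mult.assoc)

lemma apow_add: "apow k * apow l = apow (k + l)"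
proof (induction l rule: int_induct[where k = 0])
  case (step1 l)
  then show ?case by (metis add.assoc apow_plus_1 mult.assoc)
next
  case (step2 l)
  then show ?case by (metis add_diff_eq apow_minus_1 mult.assoc)
qed simp

lemma apow_2: "apow 2 = letter A * letter A"
  by (simp add: apow_def numeral_2_eq_2)

lemma letter_B_A: "letter B * letter A = apow 2 * letter B"
proof -
  have "letter B * letter A = letter B * letter A * letter Binv * letter B"
    by (simp add: mult.assoc)
  also have "\<dots> = apow 2 * letter B"
    by (simp only: letter_B_A_Binv apow_2)
  finally show ?thesis .
qed

lemma times_letter_right_cancel: "g * letter s = g' * letter s \<Longrightarrow> g = g'"
  by (metis letter_times_ginv mult.assoc mult_1_right)

lemma letter_B_apow: "letter B * apow k = apow (2 * k) * letter B"
proof (induction k rule: int_induct[where k = 0])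
  case (step1 k)
  have "letter B * apow (k + 1) = apow (2 * k) * (letter B * letter A)"
    by (simp only: apow_plus_1 step1 flip: mult.assoc)
  also have "\<dots> = apow (2 * (k + 1)) * letter B"
    by (simp add: letter_B_A distrib_left apow_add flip: mult.assoc)
  finally show ?case .
next
  case (step2 k)
  have "letter B * apow (k - 1) * letter A = apow (2 * (k - 1)) * apow 2 * letter B"
    by (simp add: apow_add step2 mult.assoc flip: apow_plus_1)
  also have "\<dots> = apow (2 * (k - 1)) * letter B * letter A"
    by (simp add: letter_B_A mult.assoc)
  finally show ?case by (rule times_letter_right_cancel)
qed simp

lemma letter_A_eq_apow: "letter A = apow 1" and letter_Ainv_eq_apow: "letter Ainv = apow (- 1)"
  by (simp_all add: apow_def)

lemma letter_B_power_apow: "letter B ^ j * apow k = apow (k * 2 ^ j) * letter B ^ j"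
proof (induction j arbitrary: k)
  case (Suc j)
  have "letter B ^ Suc j * apow k = letter B ^ j * apow (2 * k) * letter B"
    by (simp add: power_Suc2 letter_B_apow mult.assoc del: power_Suc)
  also have "\<dots> = apow (k * 2 ^ Suc j) * letter B ^ Suc j"
    by (simp only: Suc) (simp add: power_Suc2 mult.assoc mult_ac del: power_Suc)
  finally show ?case .
qed simp

lemma apow_Binv: "apow k * letter Binv = letter Binv * apow (2 * k)"
proof -
  have "apow k * letter Binv = letter Binv * (letter B * apow k) * letter Binv"
    by (simp add: mult.assoc)
  also have "\<dots> = letter Binv * apow (2 * k)"
    by (simp add: letter_B_apow mult.assoc)
  finally show ?thesis .
qed

lemma power_mult_power_eq_one:
  fixes x y :: "'a :: monoid_mult"
  assumes "x * y = 1"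
  shows "x ^ n * y ^ n = 1"
proof (induction n)
  case (Suc n)
  have "x ^ Suc n * y ^ Suc n = x ^ n * (x * y) * y ^ n"
    by (simp only: power_Suc2[of x] power_Suc[of y] mult.assoc)
  with Suc assms show ?case by simp
qed simp

lemma G2_normal_form: "\<exists>m k j. g = letter Binv ^ m * apow k * letter B ^ j"
proof (induction g rule: G2_induct)
  case one
  show ?case by (rule exI[of _ 0], rule exI[of _ 0], rule exI[of _ 0]) simp
next
  case (snoc g s)
  then obtain m k j where g: "g = letter Binv ^ m * apow k * letter B ^ j" by blast
  show ?case
  proof (cases s)
    case A
    have "g * letter s = letter Binv ^ m * apow (k + 2 ^ j) * letter B ^ j"
      by (simp add: g A letter_A_eq_apow letter_B_power_apow mult.assoc flip: apow_add)
    then show ?thesis by blast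
  next
    case Ainv
    have "g * letter s = letter Binv ^ m * (apow k * apow (- (2 ^ j))) * letter B ^ j"
      by (simp add: g Ainv letter_Ainv_eq_apow letter_B_power_apow mult.assoc)
    then have "g * letter s = letter Binv ^ m * apow (k - 2 ^ j) * letter B ^ j"
      by (simp add: apow_add)
    then show ?thesis by blast
  next
    case B
    have "g * letter s = letter Binv ^ m * apow k * letter B ^ Suc j"
      by (simp add: g B mult.assoc power_Suc2 del: power_Suc)
    then show ?thesis by blast
  next
    case Binv
    show ?thesis
    proof (cases j)
      case 0
      have "g * letter s = letter Binv ^ Suc m * apow (2 * k) * letter B ^ 0"
        by (simp add: g Binv 0 apow_Binv mult.assoc power_Suc2 del: power_Suc)
      then show ?thesis by blast
    next
      case (Suc j')
      have "g * letter s = letter Binv ^ m * apow k * letter B ^ j'"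
        by (simp add: g Binv Suc mult.assoc power_Suc2 del: power_Suc)
      then show ?thesis by blast
    qed
  qed
qed

(* dyadic m k is a^(k / 2^m) *)
definition dyadic :: "nat \<Rightarrow> int \<Rightarrow> G2" where
  "dyadic m k = letter Binv ^ m * apow k * letter B ^ m"

lemma dyadic_times_dyadic: "dyadic m k * dyadic m l = dyadic m (k + l)"
proof -
  have "dyadic m k * dyadic m l
      = letter Binv ^ m * apow k * (letter B ^ m * letter Binv ^ m) * apow l * letter B ^ m"
    by (simp add: dyadic_def mult.assoc)
  then show ?thesis
    by (simp add: power_mult_power_eq_one dyadic_def mult.assoc flip: apow_add)
qed

lemma dyadic_lift: "dyadic m k = dyadic (m + d) (k * 2 ^ d)"
proof -
  have "letter B ^ (m + d) = letter B ^ d * letter B ^ m"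
    by (simp add: add.commute power_add)
  then have "dyadic (m + d) (k * 2 ^ d)
      = letter Binv ^ m * (letter Binv ^ d * (apow (k * 2 ^ d) * letter B ^ d)) * letter B ^ m"
    by (simp add: dyadic_def power_add mult.assoc)
  also have "\<dots> = letter Binv ^ m * (letter Binv ^ d * letter B ^ d) * apow k * letter B ^ m"
    by (simp add: letter_B_power_apow mult.assoc)
  finally show ?thesis
    by (simp add: power_mult_power_eq_one dyadic_def)
qed

lemma height_zero_eq_dyadic:
  assumes "height g = 0"
  obtains m k where "g = dyadic m k"
proof -
  obtain m k j where g: "g = letter Binv ^ m * apow k * letter B ^ j"
    using G2_normal_form by blast
  with assms have "j = m" by simp
  with g show thesis using that by (simp add: dyadic_def)
qed

lemma height_zero_commute:
  assumes "height g = 0" and "height g' = 0"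
  shows "g * g' = g' * g"
proof -
  obtain m k m' k' where "g = dyadic m k" and "g' = dyadic m' k'"
    using assms height_zero_eq_dyadic by metis
  then have "g = dyadic (max m m') (k * 2 ^ (max m m' - m))"
    and "g' = dyadic (max m m') (k' * 2 ^ (max m m' - m'))"
    using dyadic_lift[of m k "max m m' - m"] dyadic_lift[of m' k' "max m m' - m'"] by simp_all
  then show ?thesis by (simp add: dyadic_times_dyadic add.commute)
qed

definition eval_word :: "gen list \<Rightarrow> G2" where
  "eval_word w = prod_list (map letter w)"

lemma eval_word_append [simp]: "eval_word (u @ v) = eval_word u * eval_word v"
  and eval_word_Cons [simp]: "eval_word (s # w) = letter s * eval_word w"
  and eval_word_Nil [simp]: "eval_word [] = 1"
  by (simp_all add: eval_word_def)

definition bsum :: "gen list \<Rightarrow> int" where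
  "bsum w = sum_list (map bexp w)"

lemma bsum_append [simp]: "bsum (u @ v) = bsum u + bsum v"
  and bsum_Cons [simp]: "bsum (s # w) = bexp s + bsum w"
  and bsum_Nil [simp]: "bsum [] = 0"
  by (simp_all add: bsum_def)

lemma height_eval_word [simp]: "height (eval_word w) = bsum w"
  by (induction w) simp_all

lemma eval_word_swap:
  assumes "bsum w1 = 0" and "bsum w2 = 0"
  shows "eval_word (u @ x # w1 @ ginv x # w2 @ x # r) = eval_word (u @ w2 @ x # w1 @ r)"
proof -
  define c where "c = letter x * eval_word w1 * letter (ginv x)"
  have "height c = 0"
    using assms(1) by (simp add: c_def bexp_ginv)
  with assms(2) have commute: "c * eval_word w2 = eval_word w2 * c"
    by (simp add: height_zero_commute)
  have "eval_word (x # w1 @ ginv x # w2 @ [x]) = c * eval_word w2 * letter x"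
    by (simp add: c_def mult.assoc)
  also have "\<dots> = eval_word w2 * c * letter x"
    by (simp only: commute)
  also have "\<dots> = eval_word (w2 @ x # w1)"
    by (simp add: c_def mult.assoc)
  finally have "eval_word u * eval_word (x # w1 @ ginv x # w2 @ [x]) * eval_word r
      = eval_word u * eval_word (w2 @ x # w1) * eval_word r"
    by (simp only:)
  then show ?thesis
    by (simp add: mult.assoc)
qed

lemma bsum_take_Suc: "i < length w \<Longrightarrow> bsum (take (Suc i) w) = bsum (take i w) + bexp (w ! i)"
  by (simp add: take_Suc_conv_app_nth)

lemma bexp_eq_1_iff: "bexp s = 1 \<longleftrightarrow> s = B"
  and bexp_eq_minus_1_iff: "bexp s = - 1 \<longleftrightarrow> s = Binv"
  and abs_bexp_le_1: "\<bar>bexp s\<bar> \<le> 1"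
  by (cases s; simp)+

lemma intermed_step_down:
  fixes f :: "nat \<Rightarrow> int"
  assumes "a \<le> b" "h \<le> f a" "f b < h" "\<And>t. a \<le> t \<Longrightarrow> t < b \<Longrightarrow> \<bar>f (Suc t) - f t\<bar> \<le> 1"
  shows "\<exists>t. a \<le> t \<and> t < b \<and> f t = h \<and> f (Suc t) = h - 1"
  using assms
proof (induction b)
  case (Suc b)
  show ?case
  proof (cases "h \<le> f b")
    case True
    with Suc.prems have "a \<le> b" by (metis le_SucE not_less)
    with True Suc.prems show ?thesis by (intro exI[of _ b]) force
  next
    case False
    with Suc.prems have "a \<le> b" by (metis le_SucE not_less)
    with False Suc.IH Suc.prems show ?thesis by fastforce
  qed
qed simp

lemma intermed_step_up:
  fixes f :: "nat \<Rightarrow> int"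
  assumes "a \<le> b" "f a < h" "h \<le> f b" "\<And>t. a \<le> t \<Longrightarrow> t < b \<Longrightarrow> \<bar>f (Suc t) - f t\<bar> \<le> 1"
  shows "\<exists>t. a \<le> t \<and> t < b \<and> f t = h - 1 \<and> f (Suc t) = h"
  using intermed_step_down[of a b "1 - h" "\<lambda>t. - f t"] assms by fastforce

(* The i-th letter of w traverses a b-edge of height h, heights measured from the start of w. *)
definition crossing :: "gen list \<Rightarrow> int \<Rightarrow> nat \<Rightarrow> bool" where
  "crossing w h i \<longleftrightarrow> i < length w \<and>
     (w ! i = B \<and> bsum (take i w) = h - 1 \<or> w ! i = Binv \<and> bsum (take i w) = h)"

lemma crossing_letter: "crossing w h i \<Longrightarrow> w ! i = B \<or> w ! i = Binv"
  by (auto simp: crossing_def)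

lemma crossing_between:
  assumes "crossing w h i" "crossing w h j" "i < j" "w ! j = w ! i"
  shows "\<exists>m. i < m \<and> m < j \<and> crossing w h m \<and> w ! m = ginv (w ! i)"
proof -
  let ?f = "\<lambda>t. bsum (take t w)"
  have j: "j < length w" using assms(2) by (simp add: crossing_def)
  have lipschitz: "\<bar>?f (Suc t) - ?f t\<bar> \<le> 1" if "t < j" for t
    using that j by (simp add: bsum_take_Suc abs_bexp_le_1)
  from assms consider "w ! i = B" "?f i = h - 1" "?f j = h - 1" | "w ! i = Binv" "?f i = h" "?f j = h"
    by (auto simp: crossing_def)
  then show ?thesis
  proof cases
    case 1
    with assms(3) j have "?f (Suc i) = h" by (simp add: bsum_take_Suc)
    with 1 assms(3) lipschitz obtain t where "Suc i \<le> t" "t < j" "?f t = h" "?f (Suc t) = h - 1"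
      using intermed_step_down[of "Suc i" j h ?f] by auto
    with 1 j show ?thesis
      by (intro exI[of _ t]) (auto simp: bsum_take_Suc bexp_eq_minus_1_iff crossing_def)
  next
    case 2
    with assms(3) j have "?f (Suc i) = h - 1" by (simp add: bsum_take_Suc)
    with 2 assms(3) lipschitz obtain t where "Suc i \<le> t" "t < j" "?f t = h - 1" "?f (Suc t) = h"
      using intermed_step_up[of "Suc i" j ?f h] by auto
    with 2 j show ?thesis
      by (intro exI[of _ t]) (auto simp: bsum_take_Suc bexp_eq_1_iff crossing_def)
  qed
qed

lemma three_crossings_alternate:
  assumes "crossing w h i1" "crossing w h i2" "crossing w h i3"
    and "i1 \<noteq> i2" "i1 \<noteq> i3" "i2 \<noteq> i3"
  shows "\<exists>i j k. i < j \<and> j < k \<and> crossing w h i \<and> crossing w h j \<and> crossing w h k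
    \<and> w ! j = ginv (w ! i) \<and> w ! k = w ! i"
proof -
  obtain i j k where ijk: "i < j" "j < k" "crossing w h i" "crossing w h j" "crossing w h k"
    using assms by (metis linorder_neqE_nat)
  show ?thesis
  proof (cases "w ! j = w ! i")
    case True
    with ijk crossing_between[of w h i j] show ?thesis by fastforce
  next
    case False
    show ?thesis
    proof (cases "w ! k = w ! j")
      case True
      with ijk crossing_between[of w h j k] show ?thesis by fastforce
    next
      case False
      with \<open>w ! j \<noteq> w ! i\<close> ijk show ?thesis
        using crossing_letter[of w h i] crossing_letter[of w h j] crossing_letter[of w h k]
        by (intro exI[of _ i] exI[of _ j] exI[of _ k]) auto
    qed
  qed
qed

lemma opposite_crossings_balanced:
  assumes "crossing w h i" "crossing w h j" "w ! j = ginv (w ! i)"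
  shows "bsum (take j w) = bsum (take (Suc i) w)"
  using assms crossing_letter[OF assms(1)]
  by (auto simp: crossing_def bsum_take_Suc)

lemma take_eq_take_append_drop: "i \<le> j \<Longrightarrow> take j w = take i w @ drop i (take j w)"
  by (metis append_take_drop_id min.absorb1 take_take)

lemma alternating_crossings_decompose:
  assumes "i < j" "j < k" "crossing w h i" "crossing w h j" "crossing w h k"
    and "w ! j = ginv (w ! i)" "w ! k = w ! i"
  obtains u x w1 w2 r where "w = u @ x # w1 @ ginv x # w2 @ x # r"
    and "bsum w1 = 0" and "bsum w2 = 0"
proof -
  define w1 where "w1 = drop (Suc i) (take j w)"
  define w2 where "w2 = drop (Suc j) (take k w)"
  have k: "k < length w" using assms(5) by (simp add: crossing_def)
  with assms(1,2) have i: "i < length w" by simp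
  have take_j: "take j w = take i w @ w ! i # w1"
    using assms(1,2) k take_eq_take_append_drop[of "Suc i" j w]
    by (simp add: w1_def take_Suc_conv_app_nth)
  have take_k: "take k w = take j w @ w ! j # w2"
    using assms(2) k take_eq_take_append_drop[of "Suc j" k w]
    by (simp add: w2_def take_Suc_conv_app_nth)
  have "w = take k w @ w ! k # drop (Suc k) w"
    using k by (simp add: id_take_nth_drop)
  then have "w = take i w @ w ! i # w1 @ ginv (w ! i) # w2 @ w ! i # drop (Suc k) w"
    using assms(6,7) by (simp add: take_j take_k)
  moreover have "bsum w1 = 0"
    using opposite_crossings_balanced[OF assms(3,4,6)] i
    by (simp add: take_j take_Suc_conv_app_nth)
  moreover have "bsum w2 = 0"
    using opposite_crossings_balanced[OF assms(4,5)] assms(2,6,7) k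
    by (simp add: take_k take_Suc_conv_app_nth)
  ultimately show thesis using that by blast
qed

lemma three_crossings_shorten:
  assumes "crossing w h i1" "crossing w h i2" "crossing w h i3"
    and "i1 \<noteq> i2" "i1 \<noteq> i3" "i2 \<noteq> i3"
  obtains w' where "length w' + 2 = length w" and "eval_word w' = eval_word w"
proof -
  obtain i j k where "i < j" "j < k" "crossing w h i" "crossing w h j" "crossing w h k"
    "w ! j = ginv (w ! i)" "w ! k = w ! i"
    using three_crossings_alternate[OF assms] by blast
  then obtain u x w1 w2 r where w: "w = u @ x # w1 @ ginv x # w2 @ x # r"
    and "bsum w1 = 0" "bsum w2 = 0"
    by (rule alternating_crossings_decompose)
  then have "eval_word w = eval_word (u @ w2 @ x # w1 @ r)"
    by (simp only: w eval_word_swap)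
  moreover have "length (u @ w2 @ x # w1 @ r) + 2 = length w"
    by (simp add: w)
  ultimately show thesis using that by metis
qed

definition word_path :: "G2 \<Rightarrow> gen list \<Rightarrow> G2 list" where
  "word_path g w = map (\<lambda>t. g * eval_word (take t w)) [0..<Suc (length w)]"

lemma length_word_path [simp]: "length (word_path g w) = Suc (length w)"
  by (simp add: word_path_def)

lemma nth_word_path: "t \<le> length w \<Longrightarrow> word_path g w ! t = g * eval_word (take t w)"
  by (simp add: word_path_def del: upt_Suc)

lemma nth_Suc_word_path:
  "t < length w \<Longrightarrow> word_path g w ! Suc t = word_path g w ! t * letter (w ! t)"
  by (simp add: nth_word_path take_Suc_conv_app_nth mult.assoc)

lemma word_path_not_Nil: "word_path g w \<noteq> []"
  by (simp add: word_path_def)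

lemma hd_word_path [simp]: "hd (word_path g w) = g"
  by (simp add: hd_conv_nth word_path_not_Nil nth_word_path)

lemma last_word_path [simp]: "last (word_path g w) = g * eval_word w"
  by (simp add: last_conv_nth word_path_not_Nil nth_word_path)

lemma is_path_word_path: "is_path (word_path g w)"
  unfolding is_path_def cayley_edges_def
  using word_path_not_Nil by (fastforce simp: nth_Suc_word_path rmul_eq_times_letter)

lemma cayley_edge_step:
  assumes "{p, q} \<in> cayley_edges"
  shows "\<exists>s. q = p * letter s"
proof -
  obtain g s where "{p, q} = {g, g * letter s}"
    using assms by (auto simp: cayley_edges_def rmul_eq_times_letter)
  moreover have "g = g * letter s * letter (ginv s)"
    by (simp add: mult.assoc)
  ultimately show ?thesis
    by (auto simp: doubleton_eq_iff)
qed

lemma path_eq_word_path: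
  assumes "is_path \<sigma>"
  obtains w where "\<sigma> = word_path (hd \<sigma>) w"
proof -
  have "\<forall>i. \<exists>s. Suc i < length \<sigma> \<longrightarrow> \<sigma> ! Suc i = \<sigma> ! i * letter s"
    using assms cayley_edge_step unfolding is_path_def by blast
  then obtain f where f: "\<And>i. Suc i < length \<sigma> \<Longrightarrow> \<sigma> ! Suc i = \<sigma> ! i * letter (f i)"
    by (metis choice)
  define w where "w = map f [0..<length \<sigma> - 1]"
  have length_w: "length \<sigma> = Suc (length w)"
    using assms by (simp add: is_path_def w_def)
  have "\<sigma> ! t = hd \<sigma> * eval_word (take t w)" if "t < length \<sigma>" for t
    using that
  proof (induction t)
    case 0
    with length_w show ?case by (cases \<sigma>) simp_all
  next
    case (Suc t)
    with length_w have "take (Suc t) w = take t w @ [f t]"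
      by (simp add: w_def take_Suc_conv_app_nth)
    with Suc f show ?case by (simp add: mult.assoc)
  qed
  with length_w have "\<sigma> = word_path (hd \<sigma>) w"
    by (intro nth_equalityI) (simp_all add: nth_word_path)
  then show thesis by (rule that)
qed

lemma geodesic_word_path_minimal:
  assumes "geodesic (word_path g w)" and "eval_word w' = eval_word w"
  shows "length w \<le> length w'"
  using assms is_path_word_path[of g w'] unfolding geodesic_def by fastforce

lemma b_edge_crossing:
  assumes "e \<in> path_edges (word_path g w)" and "b_edge e"
  obtains i where "e = {word_path g w ! i, word_path g w ! Suc i}"
    and "crossing w (edge_height e - height g) i"
proof -
  let ?\<sigma> = "word_path g w"
  obtain i where e: "e = {?\<sigma> ! i, ?\<sigma> ! Suc i}" and i: "i < length w"
    using assms(1) by (auto simp: path_edges_def)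
  obtain v where v: "e = {v, v * letter B}"
    using assms(2) by (auto simp: b_edge_def rmul_eq_times_letter)
  have height_Suc: "height (?\<sigma> ! Suc i) = height (?\<sigma> ! i) + bexp (w ! i)"
    using i by (simp add: nth_Suc_word_path)
  have height_i: "height (?\<sigma> ! i) = height g + bsum (take i w)"
    using i by (simp add: nth_word_path)
  have edge_height: "edge_height e = height v + 1"
    by (simp add: v edge_height_def)
  from e v consider "?\<sigma> ! i = v" "?\<sigma> ! Suc i = v * letter B"
    | "?\<sigma> ! i = v * letter B" "?\<sigma> ! Suc i = v"
    by (auto simp: doubleton_eq_iff)
  then have "crossing w (edge_height e - height g) i"
  proof cases
    case 1
    with height_Suc have "w ! i = B"
      by (simp add: bexp_eq_1_iff)
    with 1 i height_i edge_height show ?thesis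
      by (simp add: crossing_def)
  next
    case 2
    with height_Suc have "bexp (w ! i) = - 1"
      by simp
    then have "w ! i = Binv"
      by (simp add: bexp_eq_minus_1_iff)
    with 2 i height_i edge_height show ?thesis
      by (simp add: crossing_def)
  qed
  with e show thesis by (rule that)
qed

theorem lemma1:
  assumes "geodesic \<sigma>"
  shows "\<not> (\<exists>e1 e2 e3. e1 \<in> path_edges \<sigma> \<and> e2 \<in> path_edges \<sigma> \<and> e3 \<in> path_edges \<sigma>
            \<and> b_edge e1 \<and> b_edge e2 \<and> b_edge e3
            \<and> e1 \<noteq> e2 \<and> e1 \<noteq> e3 \<and> e2 \<noteq> e3
            \<and> edge_height e1 = edge_height e2 \<and> edge_height e2 = edge_height e3)"
proof
  assume "\<exists>e1 e2 e3. e1 \<in> path_edges \<sigma> \<and> e2 \<in> path_edges \<sigma> \<and> e3 \<in> path_edges \<sigma>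
            \<and> b_edge e1 \<and> b_edge e2 \<and> b_edge e3
            \<and> e1 \<noteq> e2 \<and> e1 \<noteq> e3 \<and> e2 \<noteq> e3
            \<and> edge_height e1 = edge_height e2 \<and> edge_height e2 = edge_height e3"
  then obtain e1 e2 e3 where edges: "e1 \<in> path_edges \<sigma>" "e2 \<in> path_edges \<sigma>" "e3 \<in> path_edges \<sigma>"
    and b_edges: "b_edge e1" "b_edge e2" "b_edge e3"
    and distinct: "e1 \<noteq> e2" "e1 \<noteq> e3" "e2 \<noteq> e3"
    and heights: "edge_height e2 = edge_height e1" "edge_height e3 = edge_height e1"
    by metis
  define g where "g = hd \<sigma>"
  obtain w where \<sigma>: "\<sigma> = word_path g w"
    using assms path_eq_word_path unfolding geodesic_def g_def by blast
  define h where "h = edge_height e1 - height g"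
  obtain i1 i2 i3 where "e1 = {\<sigma> ! i1, \<sigma> ! Suc i1}" "crossing w h i1"
    and "e2 = {\<sigma> ! i2, \<sigma> ! Suc i2}" "crossing w h i2"
    and "e3 = {\<sigma> ! i3, \<sigma> ! Suc i3}" "crossing w h i3"
    using edges b_edges b_edge_crossing heights unfolding \<sigma> h_def by metis
  moreover from calculation distinct have "i1 \<noteq> i2" "i1 \<noteq> i3" "i2 \<noteq> i3"
    by auto
  ultimately obtain w' where "length w' + 2 = length w" and "eval_word w' = eval_word w"
    using three_crossings_shorten by metis
  with assms geodesic_word_path_minimal[of g w w'] show False
    unfolding \<sigma> by simp
qed

end
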